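(* Let $A$ be a stationary, co-stationary subset of $\omega_1$, let $T$ be the tree of all countable closed (compact in the order topology of $\omega_1$) subsets of $A$ ordered by $s\le t$ iff $s$ is an initial part of $t$, and let $P(T)$ be the set of all paths of $T$ (downward closed linearly ordered subsets of $T$), viewed as a subspace of $2^T$ via characteristic functions. Then $P(T)$ is a Corson compactum, and the square $P(T)\times P(T)$ is not $nwd$-separable (hence not $d$-separable).
   Context: A Corson compactum is a compact space embeddable in $\Sigma(\mathbb{R}^\kappa)=\{x\in\mathbb{R}^\kappa:|\{\alpha:x(\alpha)\neq0\}|\le\omega\}$ for some cardinal $\kappa$. A space is $d$-separable if it has a dense subset which is a countable union of discrete subspaces; it is $nwd$-separable if it has a dense subset which is a countable union of nowhere dense subsets. *)

theory Defs
  imports "HOL-Analysis.Analysis"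
begin

text \<open>The ordinal omega_1 is modelled by a type 'a of class wellorder carrying the
order topology (class linorder_topology), which is uncountable while every proper
initial segment is countable.\<close>

definition omega1_like :: "'a::{wellorder,linorder_topology} itself \<Rightarrow> bool" where
  "omega1_like _ \<longleftrightarrow> uncountable (UNIV :: 'a set) \<and> (\<forall>x::'a. countable {..<x})"

definition club :: "('a::{wellorder,linorder_topology}) set \<Rightarrow> bool" where
  "club C \<longleftrightarrow> closed C \<and> (\<forall>x. \<exists>y\<in>C. x < y)"

definition stationary :: "('a::{wellorder,linorder_topology}) set \<Rightarrow> bool" where
  "stationary A \<longleftrightarrow> (\<forall>C. club C \<longrightarrow> A \<inter> C \<noteq> {})"

definition ccs_tree :: "('a::{wellorder,linorder_topology}) set \<Rightarrow> 'a set set" where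
  "ccs_tree A = {s. s \<subseteq> A \<and> countable s \<and> compact s}"

definition initial_part :: "('a::linorder) set \<Rightarrow> 'a set \<Rightarrow> bool" where
  "initial_part s t \<longleftrightarrow> s \<subseteq> t \<and> (\<forall>x\<in>s. \<forall>y\<in>t. y \<le> x \<longrightarrow> y \<in> s)"

definition tree_paths :: "('a::linorder) set set \<Rightarrow> 'a set set set" where
  "tree_paths T = {p. p \<subseteq> T
      \<and> (\<forall>t\<in>p. \<forall>s\<in>T. initial_part s t \<longrightarrow> s \<in> p)
      \<and> (\<forall>s\<in>p. \<forall>t\<in>p. initial_part s t \<or> initial_part t s)}"

definition path_space :: "('a::linorder) set set \<Rightarrow> ('a set \<Rightarrow> bool) topology" where
  "path_space T = subtopology (product_topology (\<lambda>_. discrete_topology (UNIV::bool set)) T)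
                     ((\<lambda>p. restrict (\<lambda>t. t \<in> p) T) ` tree_paths T)"

definition sigma_product :: "'i set \<Rightarrow> ('i \<Rightarrow> real) set" where
  "sigma_product I = {x \<in> PiE I (\<lambda>_. UNIV). countable {i\<in>I. x i \<noteq> 0}}"

text \<open>Corson compactum. Index sets are drawn from the type 'x * nat, whose
cardinality is at least |X| + aleph_0, which suffices for every kappa.\<close>
definition corson_compactum :: "'x topology \<Rightarrow> bool" where
  "corson_compactum X \<longleftrightarrow> compact_space X \<and>
     (\<exists>(I::('x \<times> nat) set) f. embedding_map X
        (subtopology (product_topology (\<lambda>_. euclideanreal) I) (sigma_product I)) f)"

definition nowhere_dense_in :: "'x topology \<Rightarrow> 'x set \<Rightarrow> bool" where
  "nowhere_dense_in X N \<longleftrightarrow> N \<subseteq> topspace X \<and> X interior_of (X closure_of N) = {}"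

definition discrete_subspace :: "'x topology \<Rightarrow> 'x set \<Rightarrow> bool" where
  "discrete_subspace X D \<longleftrightarrow> D \<subseteq> topspace X \<and> subtopology X D = discrete_topology D"

definition dense_in :: "'x topology \<Rightarrow> 'x set \<Rightarrow> bool" where
  "dense_in X D \<longleftrightarrow> D \<subseteq> topspace X \<and> X closure_of D = topspace X"

definition d_separable :: "'x topology \<Rightarrow> bool" where
  "d_separable X \<longleftrightarrow> (\<exists>N::nat \<Rightarrow> 'x set. dense_in X (\<Union>(range N))
      \<and> (\<forall>n. discrete_subspace X (N n)))"

definition nwd_separable :: "'x topology \<Rightarrow> bool" where
  "nwd_separable X \<longleftrightarrow> (\<exists>N::nat \<Rightarrow> 'x set. dense_in X (\<Union>(range N))
      \<and> (\<forall>n. nowhere_dense_in X (N n)))"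

end

theory Submission
  imports Defs
begin

text \<open>
  A path of \<open>T\<close> with countable union is countable, since each node is the part of the union
  below its maximum. A path with uncountable union would have a club union contained in \<open>A\<close>,
  which the stationarity of \<open>- A\<close> forbids. So every point of the compact space \<open>P(T) \<subseteq> 2\<^sup>T\<close>
  has countable support, and \<open>P(T)\<close> embeds into a \<open>\<Sigma>\<close>-product.

  In \<open>P(T) \<times> P(T)\<close>, every basic box \<open>[s] \<times> [t]\<close> of cylinders contains a smaller box
  \<open>[s'] \<times> [t']\<close>, with \<open>s'\<close>, \<open>t'\<close> end-extending \<open>s\<close>, \<open>t\<close>, that misses a given nowhere dense
  set; for a discrete set, extend further to leave the path of its isolated point. Given countably
  many such sets, build a sequence of pairs of nodes, the \<open>n\<close>-th pair entering the box that
  misses the \<open>n\<close>-th set, and make both coordinates cofinal in a point \<open>\<delta> \<in> A\<close> of the club of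
  ordinals closed under all countably many constructions below them. Topped with \<open>\<delta>\<close>, the two
  unions are nodes whose box misses every set, so their union is not dense.
\<close>

section \<open>Countable ordinals\<close>

lemma omega1_like_countable_atMost:
  assumes "omega1_like TYPE('a::{wellorder,linorder_topology})"
  shows "countable {..x::'a}"
proof -
  have "{..x} = insert x {..<x}" by auto
  then show ?thesis using assms unfolding omega1_like_def by simp
qed

lemma omega1_like_countable_bounded:
  assumes om: "omega1_like TYPE('a::{wellorder,linorder_topology})" and "countable (S::'a set)"
  shows "\<exists>b. \<forall>x\<in>S. x < b"
proof -
  have "countable (\<Union>x\<in>S. {..x})"
    by (rule countable_UN[OF assms(2) omega1_like_countable_atMost[OF om]])
  moreover have "uncountable (UNIV::'a set)" using om unfolding omega1_like_def by blast
  ultimately have "(\<Union>x\<in>S. {..x}) \<noteq> UNIV" by metis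
  then obtain b where "b \<notin> (\<Union>x\<in>S. {..x})" by blast
  then show ?thesis by (auto simp: not_le)
qed

lemma omega1_like_sequence_sup:
  fixes u :: "nat \<Rightarrow> 'a::{wellorder,linorder_topology}"
  assumes om: "omega1_like TYPE('a)"
  shows "\<exists>d. (\<forall>n. u n \<le> d) \<and> (\<forall>g<d. \<exists>n. g < u n)"
proof -
  obtain b where b: "\<forall>x\<in>range u. x < b"
    using omega1_like_countable_bounded[OF om, of "range u"] by auto
  define d where "d = (LEAST z. \<forall>n. u n \<le> z)"
  have "\<forall>n. u n \<le> d" unfolding d_def by (rule LeastI[of _ b]) (use b in \<open>auto intro: less_imp_le\<close>)
  moreover have "\<exists>n. g < u n" if "g < d" for g
  proof (rule ccontr)
    assume "\<not> (\<exists>n. g < u n)"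
    then have "\<forall>n. u n \<le> g" by (auto simp: not_less)
    then have "d \<le> g" unfolding d_def by (rule Least_le)
    then show False using \<open>g < d\<close> by simp
  qed
  ultimately show ?thesis by blast
qed

lemma stationary_unbounded:
  assumes om: "omega1_like TYPE('a::{wellorder,linorder_topology})" and "stationary (A::'a set)"
  shows "\<exists>a\<in>A. b < a"
proof -
  obtain c where c: "b < c" using omega1_like_countable_bounded[OF om, of "{b}"] by auto
  have "club {c..}" unfolding club_def
  proof
    show "\<forall>x. \<exists>y\<in>{c..}. x < y"
    proof
      fix x
      obtain y where "x < y" "c < y" using omega1_like_countable_bounded[OF om, of "{x, c}"] by auto
      then show "\<exists>y\<in>{c..}. x < y" by auto
    qed
  qed simp
  then obtain a where "a \<in> A" "c \<le> a" using assms(2) unfolding stationary_def by blast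
  then show ?thesis using c by (auto intro: less_le_trans)
qed

lemma club_closure_points:
  fixes f :: "'a::{wellorder,linorder_topology} \<Rightarrow> 'a"
  assumes om: "omega1_like TYPE('a)"
  shows "club {d. c \<le> d \<and> (\<forall>g<d. f g \<le> d)}" (is "club ?C")
  unfolding club_def
proof
  show "closed ?C"
    unfolding closed_def
  proof (subst open_subopen, intro ballI)
    fix d assume "d \<in> - ?C"
    then consider "d < c" | g where "g < d" "d < f g" by (auto simp: not_le)
    then show "\<exists>U. open U \<and> d \<in> U \<and> U \<subseteq> - ?C"
    proof cases
      case 1
      then show ?thesis by (intro exI[of _ "{..<c}"]) auto
    next
      case 2
      then show ?thesis using leD by (intro exI[of _ "{g<..<f g}"]) fastforce
    qed
  qed
  show "\<forall>x. \<exists>d\<in>?C. x < d"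
  proof
    fix x
    obtain b0 where b0: "x < b0" "c < b0" using omega1_like_countable_bounded[OF om, of "{x, c}"] by auto
    have "\<exists>b. \<forall>g\<le>y. f g < b" for y
      using omega1_like_countable_bounded[OF om, of "f ` {..y}"] omega1_like_countable_atMost[OF om] by auto
    then obtain h where h: "\<And>y g. g \<le> y \<Longrightarrow> f g < h y" by metis
    obtain d where d: "\<forall>n. (h ^^ n) b0 \<le> d" "\<forall>g<d. \<exists>n. g < (h ^^ n) b0"
      using omega1_like_sequence_sup[OF om, of "\<lambda>n. (h ^^ n) b0"] by blast
    have "\<forall>g<d. f g \<le> d"
    proof (intro allI impI)
      fix g assume "g < d"
      then obtain n where "g < (h ^^ n) b0" using d(2) by blast
      then have "f g < (h ^^ Suc n) b0" using h by simp
      then show "f g \<le> d" using d(1) by (meson less_imp_le order_trans)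
    qed
    moreover have "x < d" "c \<le> d" using b0 d(1)[rule_format, of 0] by auto
    ultimately show "\<exists>d\<in>?C. x < d" by blast
  qed
qed

section \<open>End-extension\<close>

lemma initial_part_refl: "initial_part s s"
  unfolding initial_part_def by auto

lemma initial_part_subset: "initial_part s t \<Longrightarrow> s \<subseteq> t"
  unfolding initial_part_def by auto

lemma initial_part_trans:
  assumes "initial_part r s" and "initial_part s t"
  shows "initial_part r t"
  using assms unfolding initial_part_def by (meson subset_iff)

lemma initial_part_insert_greater:
  "(\<And>x. x \<in> s \<Longrightarrow> x < (a::'a::linorder)) \<Longrightarrow> initial_part s (insert a s)"
  unfolding initial_part_def using leD by fastforce

lemma initial_part_insert_cancel:
  "initial_part s (insert a t) \<Longrightarrow> a \<notin> s \<Longrightarrow> initial_part s t"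
  unfolding initial_part_def by blast

lemma initial_parts_comparable:
  fixes r s t :: "'a::linorder set"
  assumes rt: "initial_part r t" and st: "initial_part s t"
  shows "initial_part r s \<or> initial_part s r"
proof (cases "r \<subseteq> s")
  case True
  then show ?thesis using rt st unfolding initial_part_def by blast
next
  case False
  then obtain x where x: "x \<in> r" "x \<notin> s" by auto
  have "s \<subseteq> r"
  proof
    fix y assume y: "y \<in> s"
    show "y \<in> r"
    proof (cases "y \<le> x")
      case True
      then show ?thesis using rt st x y unfolding initial_part_def by blast
    next
      case False
      then show ?thesis using st rt x y unfolding initial_part_def by (meson subsetD nle_le)
    qed
  qed
  then show ?thesis using rt st unfolding initial_part_def by blast
qed

definition initial_part_chain :: "'a::linorder set set \<Rightarrow> bool" where
  "initial_part_chain P \<longleftrightarrow> (\<forall>s\<in>P. \<forall>t\<in>P. initial_part s t \<or> initial_part t s)"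

lemma initial_part_chain_range:
  fixes S :: "nat \<Rightarrow> 'a::linorder set"
  assumes "\<And>k j. k \<le> j \<Longrightarrow> initial_part (S k) (S j)"
  shows "initial_part_chain (range S)"
  unfolding initial_part_chain_def
proof (intro ballI)
  fix s t assume "s \<in> range S" "t \<in> range S"
  then obtain k j where "s = S k" "t = S j" by blast
  then show "initial_part s t \<or> initial_part t s" using assms nat_le_linear[of k j] by blast
qed

lemma finite_initial_part_chain_greatest:
  assumes "finite P" "P \<noteq> {}" "initial_part_chain P"
  shows "\<exists>m\<in>P. \<forall>s\<in>P. initial_part s m"
  using assms
proof (induction P rule: finite_ne_induct)
  case (singleton x)
  then show ?case by (simp add: initial_part_refl)
next
  case (insert x P)
  then obtain m where m: "m \<in> P" "\<forall>s\<in>P. initial_part s m"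
    unfolding initial_part_chain_def by blast
  have "initial_part m x \<or> initial_part x m"
    using insert.prems m(1) unfolding initial_part_chain_def by blast
  then show ?case
  proof
    assume "initial_part m x"
    then show ?thesis using m initial_part_trans initial_part_refl by (intro bexI[of _ x]) blast+
  next
    assume "initial_part x m"
    then show ?thesis using m by (intro bexI[of _ m]) auto
  qed
qed

lemma initial_part_chain_downward:
  assumes "initial_part_chain P" "t \<in> P" "x \<in> t" "y \<in> \<Union>P" "y \<le> x"
  shows "y \<in> t"
proof -
  obtain t' where t': "t' \<in> P" "y \<in> t'" using assms(4) by blast
  then have "initial_part t' t \<or> initial_part t t'"
    using assms(1,2) unfolding initial_part_chain_def by blast
  then show ?thesis
  proof
    assume "initial_part t' t"
    then show ?thesis using t'(2) initial_part_subset by blast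
  next
    assume "initial_part t t'"
    then show ?thesis using assms(3,5) t'(2) unfolding initial_part_def by blast
  qed
qed

lemma initial_part_Union_chain_insert:
  assumes "initial_part_chain P" "t \<in> P" "\<And>x. x \<in> \<Union>P \<Longrightarrow> x < d"
  shows "initial_part t (insert d (\<Union>P))"
  unfolding initial_part_def
proof (intro conjI ballI impI)
  show "t \<subseteq> insert d (\<Union>P)" using assms(2) by blast
  fix x y assume x: "x \<in> t" and y: "y \<in> insert d (\<Union>P)" and "y \<le> x"
  moreover have "x < d" using assms(2,3) x by blast
  ultimately have "y \<in> \<Union>P" by auto
  then show "y \<in> t" using initial_part_chain_downward[OF assms(1,2) x] \<open>y \<le> x\<close> by blast
qed

text \<open>The point \<open>d\<close> is the supremum of \<open>\<Union>P\<close>, so a neighbourhood of \<open>d\<close> covers all of it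
  except an initial part of a single member of \<open>P\<close>; \<open>c < d\<close> only rules out that \<open>d\<close> is the
  least element.\<close>
lemma compact_Union_chain_insert:
  fixes P :: "'a::linorder_topology set set"
  assumes chain: "initial_part_chain P"
    and below: "\<And>x. x \<in> \<Union>P \<Longrightarrow> x < d"
    and cofinal: "\<And>b. b < d \<Longrightarrow> \<exists>x\<in>\<Union>P. b < x"
    and compact: "\<And>t. t \<in> P \<Longrightarrow> compact t"
    and "c < d"
  shows "compact (insert d (\<Union>P))"
proof (rule compactI)
  fix C assume C_open: "\<forall>U\<in>C. open U" and cover: "insert d (\<Union>P) \<subseteq> \<Union>C"
  then obtain W where W: "W \<in> C" "d \<in> W" by blast
  have "open W" using W(1) C_open by blast
  then obtain b where b: "b < d" "{b<..d} \<subseteq> W" using open_left[OF _ W(2) \<open>c < d\<close>] by blast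
  obtain t x where tx: "t \<in> P" "x \<in> t" "b < x" using cofinal[OF b(1)] by blast
  have sub: "insert d (\<Union>P) \<subseteq> t \<union> {b<..d}"
  proof
    fix y assume y: "y \<in> insert d (\<Union>P)"
    show "y \<in> t \<union> {b<..d}"
    proof (cases "b < y")
      case True
      moreover have "y \<le> d" using y below[of y] by (cases "y = d") (auto intro: less_imp_le)
      ultimately show ?thesis by simp
    next
      case False
      then have "y \<in> \<Union>P" "y \<le> x" using y b(1) tx(3) by auto
      then show ?thesis using initial_part_chain_downward[OF chain tx(1,2)] by blast
    qed
  qed
  have "t \<subseteq> \<Union>C" using cover tx(1) by blast
  then obtain D where D: "D \<subseteq> C" "finite D" "t \<subseteq> \<Union>D"
    using C_open by (blast elim: compactE[OF compact[OF tx(1)]])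
  have "t \<union> {b<..d} \<subseteq> \<Union>(insert W D)" using b(2) D(3) by auto
  then have "insert d (\<Union>P) \<subseteq> \<Union>(insert W D)" using sub by (rule subset_trans[rotated])
  then show "\<exists>C'\<subseteq>C. finite C' \<and> insert d (\<Union>P) \<subseteq> \<Union>C'"
    using D W(1) by (intro exI[of _ "insert W D"]) auto
qed

section \<open>The tree of countable closed subsets and its paths\<close>

lemma ccs_tree_memI: "s \<subseteq> A \<Longrightarrow> countable s \<Longrightarrow> compact s \<Longrightarrow> s \<in> ccs_tree A"
  unfolding ccs_tree_def by blast

lemma ccs_tree_subset: "s \<in> ccs_tree A \<Longrightarrow> s \<subseteq> A"
  and ccs_tree_countable: "s \<in> ccs_tree A \<Longrightarrow> countable s"
  and ccs_tree_compact: "s \<in> ccs_tree A \<Longrightarrow> compact s"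
  unfolding ccs_tree_def by auto

lemma empty_in_ccs_tree: "{} \<in> ccs_tree A"
  unfolding ccs_tree_def by auto

lemma ccs_tree_insert: "s \<in> ccs_tree A \<Longrightarrow> a \<in> A \<Longrightarrow> insert a s \<in> ccs_tree A"
  unfolding ccs_tree_def by auto

lemma insert_Union_chain_in_ccs_tree:
  assumes "initial_part_chain P" "countable P" "P \<subseteq> ccs_tree A" "d \<in> A" "c < d"
    and "\<And>x. x \<in> \<Union>P \<Longrightarrow> x < d" "\<And>b. b < d \<Longrightarrow> \<exists>x\<in>\<Union>P. b < x"
  shows "insert d (\<Union>P) \<in> ccs_tree A"
proof (rule ccs_tree_memI)
  show "insert d (\<Union>P) \<subseteq> A" using assms(3,4) ccs_tree_subset by blast
  have "countable (\<Union>t\<in>P. t)"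
    by (rule countable_UN[OF assms(2)]) (use assms(3) ccs_tree_countable in blast)
  then show "countable (insert d (\<Union>P))" by simp
  show "compact (insert d (\<Union>P))"
    using assms by (intro compact_Union_chain_insert) (auto intro: ccs_tree_compact)
qed

lemma tree_paths_subset: "p \<in> tree_paths T \<Longrightarrow> p \<subseteq> T"
  and tree_paths_downward: "p \<in> tree_paths T \<Longrightarrow> t \<in> p \<Longrightarrow> s \<in> T \<Longrightarrow> initial_part s t \<Longrightarrow> s \<in> p"
  and tree_paths_chain: "p \<in> tree_paths T \<Longrightarrow> initial_part_chain p"
  unfolding tree_paths_def initial_part_chain_def by auto

lemma tree_pathsI:
  "p \<subseteq> T \<Longrightarrow> (\<And>t s. t \<in> p \<Longrightarrow> s \<in> T \<Longrightarrow> initial_part s t \<Longrightarrow> s \<in> p) \<Longrightarrow> initial_part_chain p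
    \<Longrightarrow> p \<in> tree_paths T"
  unfolding tree_paths_def initial_part_chain_def by blast

lemma initial_parts_in_tree_paths: "{r \<in> T. initial_part r s} \<in> tree_paths T"
  using initial_part_trans initial_parts_comparable
  unfolding tree_paths_def by blast

text \<open>A node of a path is determined by its greatest element, because it is an initial part of the
  union of the path.\<close>
lemma countable_path_if_countable_Union:
  fixes T :: "'a::linorder_topology set set"
  assumes "\<And>t. t \<in> T \<Longrightarrow> compact t" "p \<in> tree_paths T" "countable (\<Union>p)"
  shows "countable p"
proof -
  have "p \<subseteq> insert {} ((\<lambda>m. \<Union>p \<inter> {..m}) ` \<Union>p)"
  proof
    fix t assume t: "t \<in> p"
    show "t \<in> insert {} ((\<lambda>m. \<Union>p \<inter> {..m}) ` \<Union>p)"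
    proof (cases "t = {}")
      case False
      have "compact t" using assms(1,2) t tree_paths_subset by blast
      then obtain m where m: "m \<in> t" "\<forall>x\<in>t. x \<le> m" using compact_attains_sup False by blast
      have "t = \<Union>p \<inter> {..m}"
        using m t initial_part_chain_downward[OF tree_paths_chain[OF assms(2)] t m(1)] by auto
      then show ?thesis using m t by blast
    qed simp
  qed
  moreover have "countable (insert {} ((\<lambda>m. \<Union>p \<inter> {..m}) ` \<Union>p))" using assms(3) by simp
  ultimately show ?thesis by (rule countable_subset)
qed

lemma closed_Union_path:
  fixes T :: "'a::linorder_topology set set"
  assumes "\<And>t. t \<in> T \<Longrightarrow> closed t" "p \<in> tree_paths T" "\<And>z. \<exists>x\<in>\<Union>p. z < x"
  shows "closed (\<Union>p)"
  unfolding closed_def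
proof (subst open_subopen, intro ballI)
  fix z assume z: "z \<in> - \<Union>p"
  obtain t x where t: "t \<in> p" "x \<in> t" "z < x" using assms(3) by blast
  have "closed t" using assms(1,2) t(1) tree_paths_subset by blast
  moreover have "{..<x} - t \<subseteq> - \<Union>p"
  proof
    fix y assume "y \<in> {..<x} - t"
    then show "y \<in> - \<Union>p"
      using initial_part_chain_downward[OF tree_paths_chain[OF assms(2)] t(1,2), of y] by force
  qed
  moreover have "z \<in> {..<x} - t" using z t by auto
  ultimately show "\<exists>U. open U \<and> z \<in> U \<and> U \<subseteq> - \<Union>p"
    by (intro exI[of _ "{..<x} - t"]) (auto intro: open_Diff)
qed

text \<open>The union of an uncountable path is a club inside \<open>A\<close>, contradicting the stationarity
  of \<open>- A\<close>.\<close>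
lemma countable_path_ccs_tree:
  fixes A :: "'a::{wellorder,linorder_topology} set"
  assumes om: "omega1_like TYPE('a)" and "stationary (- A)" and p: "p \<in> tree_paths (ccs_tree A)"
  shows "countable p"
proof -
  have "countable (\<Union>p)"
  proof (rule ccontr)
    assume uncountable: "uncountable (\<Union>p)"
    have unbounded: "\<exists>x\<in>\<Union>p. z < x" for z
    proof (rule ccontr)
      assume "\<not> (\<exists>x\<in>\<Union>p. z < x)"
      then have "\<Union>p \<subseteq> {..z}" by (auto simp: not_less)
      then show False
        using countable_subset[OF _ omega1_like_countable_atMost[OF om]] uncountable by simp
    qed
    have "closed (\<Union>p)"
      by (rule closed_Union_path[OF _ p unbounded]) (rule compact_imp_closed[OF ccs_tree_compact])
    then have "club (\<Union>p)" unfolding club_def using unbounded by blast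
    then have "- A \<inter> \<Union>p \<noteq> {}" using assms(2) unfolding stationary_def by simp
    moreover have "\<Union>p \<subseteq> A" using tree_paths_subset[OF p] ccs_tree_subset by blast
    ultimately show False by blast
  qed
  then show ?thesis
    by (intro countable_path_if_countable_Union[OF _ p]) (simp_all add: ccs_tree_compact)
qed

section \<open>The path space\<close>

definition path_indicator :: "'a::linorder set set \<Rightarrow> 'a set set \<Rightarrow> 'a set \<Rightarrow> bool" where
  "path_indicator T p = restrict (\<lambda>t. t \<in> p) T"

abbreviation boolean_cube :: "'b set \<Rightarrow> ('b \<Rightarrow> bool) topology" where
  "boolean_cube T \<equiv> product_topology (\<lambda>_. discrete_topology UNIV) T"

lemma path_space_eq: "path_space T = subtopology (boolean_cube T) (path_indicator T ` tree_paths T)"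
  unfolding path_space_def path_indicator_def by simp

lemma topspace_path_space: "topspace (path_space T) = path_indicator T ` tree_paths T"
  unfolding path_space_eq by (auto simp: path_indicator_def)

lemma path_indicator_apply: "t \<in> T \<Longrightarrow> path_indicator T p t = (t \<in> p)"
  unfolding path_indicator_def by simp

lemma path_indicator_image_eq:
  "path_indicator T ` tree_paths T = {x \<in> topspace (boolean_cube T). \<forall>s\<in>T. \<forall>t\<in>T.
      (initial_part s t \<longrightarrow> x t \<longrightarrow> x s) \<and> (x s \<longrightarrow> x t \<longrightarrow> initial_part s t \<or> initial_part t s)}"
    (is "_ = ?K")
proof
  show "path_indicator T ` tree_paths T \<subseteq> ?K"
  proof
    fix x assume "x \<in> path_indicator T ` tree_paths T"
    then obtain p where p: "p \<in> tree_paths T" and x: "x = path_indicator T p" by blast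
    have "x \<in> topspace (boolean_cube T)" unfolding x by (simp add: path_indicator_def)
    then show "x \<in> ?K"
      using tree_paths_downward[OF p] tree_paths_chain[OF p]
      unfolding x initial_part_chain_def by (auto simp: path_indicator_apply)
  qed
  show "?K \<subseteq> path_indicator T ` tree_paths T"
  proof
    fix x assume x: "x \<in> ?K"
    have "{t \<in> T. x t} \<in> tree_paths T"
      using x by (intro tree_pathsI) (auto simp: initial_part_chain_def)
    moreover have "x = path_indicator T {t \<in> T. x t}"
      using x by (auto simp: path_indicator_def PiE_def extensional_def fun_eq_iff)
    ultimately show "x \<in> path_indicator T ` tree_paths T" by blast
  qed
qed

lemma closedin_boolean_cube_pair_condition:
  assumes "s \<in> T" "t \<in> T"
  shows "closedin (boolean_cube T) {x \<in> topspace (boolean_cube T). R (x s) (x t)}"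
proof -
  have "continuous_map (boolean_cube T) (prod_topology (discrete_topology UNIV) (discrete_topology UNIV))
      (\<lambda>x. (x s, x t))"
    using continuous_map_product_projection[OF assms(1)] continuous_map_product_projection[OF assms(2)]
    by (rule continuous_map_pairedI)
  then have "closedin (boolean_cube T) {x \<in> topspace (boolean_cube T). (x s, x t) \<in> {(a, b). R a b}}"
    by (rule closedin_continuous_map_preimage) (simp flip: prod_topology_discrete_topology)
  then show ?thesis by simp
qed

lemma compact_space_path_space: "compact_space (path_space T)"
proof -
  let ?R = "\<lambda>s t a b. (initial_part s t \<longrightarrow> b \<longrightarrow> a) \<and> (a \<longrightarrow> b \<longrightarrow> initial_part s t \<or> initial_part t s)"
  let ?C = "\<lambda>(s, t). {x \<in> topspace (boolean_cube T). ?R s t (x s) (x t)}"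
  have "path_indicator T ` tree_paths T = \<Inter>(insert (topspace (boolean_cube T)) (?C ` (T \<times> T)))"
    unfolding path_indicator_image_eq by auto
  moreover have "closedin (boolean_cube T) \<dots>"
    by (intro closedin_Inter)
      (auto simp del: topspace_product_topology intro: closedin_boolean_cube_pair_condition)
  moreover have "compact_space (boolean_cube T)"
    by (simp add: compact_space_product_topology compact_space_discrete_topology)
  ultimately show ?thesis
    unfolding path_space_eq by (metis closedin_compact_space compact_space_subtopology)
qed

lemma corson_compactum_boolean_subspace:
  fixes T :: "'b set" and S :: "('b \<Rightarrow> bool) set"
  defines "X \<equiv> subtopology (boolean_cube T) S"
  assumes compact: "compact_space X" and countable: "\<And>x. x \<in> topspace X \<Longrightarrow> countable {t \<in> T. x t}"
  shows "corson_compactum X"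
proof -
  \<comment> \<open>The index type of \<open>corson_compactum\<close> is \<open>('b \<Rightarrow> bool) \<times> nat\<close>: code node \<open>t\<close> as \<open>((=) t, 0)\<close>.\<close>
  let ?j = "\<lambda>t. ((=) t, 0::nat)"
  let ?I = "?j ` T"
  let ?Y = "subtopology (product_topology (\<lambda>_. euclideanreal) ?I) (sigma_product ?I)"
  define f where "f x = restrict (\<lambda>(g, _). of_bool (\<exists>t. g = (=) t \<and> x t) :: real) ?I" for x
  have f_apply: "f x (?j t) = of_bool (x t)" if "t \<in> T" for x t
    using that unfolding f_def by (auto, metis)
  have "continuous_map X (discrete_topology UNIV) (\<lambda>x. x t)" if "t \<in> T" for t
    unfolding X_def by (rule continuous_map_from_subtopology[OF continuous_map_product_projection[OF that]])
  then have "continuous_map X euclideanreal (of_bool \<circ> (\<lambda>x. x t))" if "t \<in> T" for t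
    by (rule continuous_map_compose[OF _ continuous_map_from_discrete_topology[THEN iffD2]]) (auto simp: that)
  moreover have "(\<lambda>x. f x (?j t)) = of_bool \<circ> (\<lambda>x. x t)" if "t \<in> T" for t
    using f_apply[OF that] by (simp add: fun_eq_iff)
  ultimately have "continuous_map X euclideanreal (\<lambda>x. f x (?j t))" if "t \<in> T" for t
    using that by metis
  then have "continuous_map X (product_topology (\<lambda>_. euclideanreal) ?I) f"
    unfolding continuous_map_componentwise by (auto simp: f_def)
  moreover have "f ` topspace X \<subseteq> sigma_product ?I"
  proof
    fix y assume "y \<in> f ` topspace X"
    then obtain x where x: "x \<in> topspace X" "y = f x" by blast
    have "{i \<in> ?I. f x i \<noteq> 0} \<subseteq> ?j ` {t \<in> T. x t}"
      using f_apply by auto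
    then have "countable {i \<in> ?I. f x i \<noteq> 0}"
      using countable[OF x(1)] by (meson countable_image countable_subset)
    then show "y \<in> sigma_product ?I" unfolding sigma_product_def x(2) by (simp add: f_def)
  qed
  ultimately have "continuous_map X ?Y f"
    by (simp add: continuous_map_in_subtopology image_subset_iff_funcset[symmetric])
  moreover have "Hausdorff_space ?Y"
    by (rule Hausdorff_space_subtopology) (simp add: Hausdorff_space_product_topology)
  moreover have "inj_on f (topspace X)"
  proof
    fix x y assume x: "x \<in> topspace X" and y: "y \<in> topspace X" and "f x = f y"
    then have "x t = y t" if "t \<in> T" for t
      using f_apply[OF that, of x] f_apply[OF that, of y] by (cases "x t"; cases "y t") auto
    moreover have "x \<in> extensional T" "y \<in> extensional T" using x y unfolding X_def by (auto simp: PiE_def)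
    ultimately show "x = y" by (auto intro: extensionalityI)
  qed
  ultimately have "embedding_map X ?Y f"
    by (intro continuous_imp_embedding_map compact)
  then show ?thesis using compact unfolding corson_compactum_def by blast
qed

lemma corson_compactum_path_space:
  fixes A :: "'a::{wellorder,linorder_topology} set"
  assumes "omega1_like TYPE('a)" and "stationary (- A)"
  shows "corson_compactum (path_space (ccs_tree A))"
proof -
  have "countable {t \<in> ccs_tree A. x t}" if x: "x \<in> topspace (path_space (ccs_tree A))" for x
  proof -
    obtain p where p: "p \<in> tree_paths (ccs_tree A)" and x: "x = path_indicator (ccs_tree A) p"
      using x unfolding topspace_path_space by blast
    then have "{t \<in> ccs_tree A. x t} = p" using tree_paths_subset[OF p] by (auto simp: path_indicator_apply)
    then show ?thesis using countable_path_ccs_tree[OF assms p] by simp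
  qed
  then show ?thesis
    using corson_compactum_boolean_subspace[of "ccs_tree A" "path_indicator (ccs_tree A) ` tree_paths (ccs_tree A)"]
      compact_space_path_space unfolding path_space_eq by blast
qed

definition cylinder :: "'a::linorder set set \<Rightarrow> 'a set \<Rightarrow> ('a set \<Rightarrow> bool) set" where
  "cylinder T s = {x \<in> topspace (path_space T). x s}"

lemma openin_cylinder:
  assumes "s \<in> T"
  shows "openin (path_space T) (cylinder T s)"
proof -
  have "openin (boolean_cube T) {x \<in> topspace (boolean_cube T). x s \<in> {True}}"
    by (rule openin_continuous_map_preimage[OF continuous_map_product_projection[OF assms]]) simp
  then have "openin (path_space T) (path_indicator T ` tree_paths T \<inter> {x \<in> topspace (boolean_cube T). x s \<in> {True}})"
    unfolding path_space_eq by (rule openin_subtopology_Int2)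
  moreover have "path_indicator T ` tree_paths T \<inter> {x \<in> topspace (boolean_cube T). x s \<in> {True}} = cylinder T s"
    unfolding cylinder_def topspace_path_space by (auto simp: path_indicator_def)
  ultimately show ?thesis by simp
qed

lemma path_indicator_in_cylinder:
  "s \<in> T \<Longrightarrow> p \<in> tree_paths T \<Longrightarrow> path_indicator T p \<in> cylinder T s \<longleftrightarrow> s \<in> p"
  unfolding cylinder_def topspace_path_space by (auto simp: path_indicator_apply)

lemma cylinderE:
  assumes "x \<in> cylinder T s"
  obtains q where "q \<in> tree_paths T" "x = path_indicator T q"
  using assms unfolding cylinder_def topspace_path_space by blast

lemma cylinder_antimono:
  assumes "s \<in> T" "s' \<in> T" "initial_part s s'"
  shows "cylinder T s' \<subseteq> cylinder T s"
proof
  fix x assume x: "x \<in> cylinder T s'"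
  then obtain q where q: "q \<in> tree_paths T" "x = path_indicator T q" by (rule cylinderE)
  then have "s' \<in> q" using x path_indicator_in_cylinder[OF assms(2)] by simp
  then have "s \<in> q" using tree_paths_downward[OF q(1) _ assms(1,3)] by simp
  then show "x \<in> cylinder T s" using q path_indicator_in_cylinder[OF assms(1)] by simp
qed

lemma cylinder_nonempty:
  "s \<in> T \<Longrightarrow> path_indicator T {r \<in> T. initial_part r s} \<in> cylinder T s"
  by (simp add: path_indicator_in_cylinder initial_parts_in_tree_paths initial_part_refl)

lemma openin_path_space_finitely_determined:
  assumes "openin (path_space T) U" "x \<in> U"
  obtains F where "finite F" "F \<subseteq> T"
    "\<And>y. y \<in> topspace (path_space T) \<Longrightarrow> (\<And>i. i \<in> F \<Longrightarrow> y i = x i) \<Longrightarrow> y \<in> U"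
proof -
  obtain W where W: "openin (boolean_cube T) W" "U = W \<inter> path_indicator T ` tree_paths T"
    using assms(1) unfolding path_space_eq openin_subtopology by blast
  then obtain V where V: "finite {i \<in> T. V i \<noteq> UNIV}" "x \<in> PiE T V" "PiE T V \<subseteq> W"
    using assms(2) unfolding openin_product_topology_alt by force
  show ?thesis
  proof
    show "finite {i \<in> T. V i \<noteq> UNIV}" "{i \<in> T. V i \<noteq> UNIV} \<subseteq> T" using V(1) by auto
    fix y assume y: "y \<in> topspace (path_space T)" and eq: "\<And>i. i \<in> {i \<in> T. V i \<noteq> UNIV} \<Longrightarrow> y i = x i"
    have "y \<in> PiE T V"
      using y V(2) eq unfolding topspace_path_space by (force simp: PiE_iff path_indicator_def)
    then show "y \<in> U" using y V(3) W(2) unfolding topspace_path_space by blast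
  qed
qed

lemma path_membership_below_insert:
  assumes p: "p \<in> tree_paths T" and q: "q \<in> tree_paths T"
    and "m \<in> p" "\<And>x. x \<in> m \<Longrightarrow> x < a" "insert a m \<in> q"
    and "i \<in> T" "a \<notin> i" "i \<in> p \<Longrightarrow> initial_part i m"
  shows "i \<in> q \<longleftrightarrow> i \<in> p"
proof
  assume "i \<in> q"
  then have "initial_part i (insert a m) \<or> initial_part (insert a m) i"
    using tree_paths_chain[OF q] assms(5) unfolding initial_part_chain_def by blast
  then have "initial_part i m"
    using assms(7) initial_part_insert_cancel initial_part_subset by blast
  then show "i \<in> p" using tree_paths_downward[OF p assms(3,6)] by blast
next
  assume "i \<in> p"
  then have "initial_part i (insert a m)"
    using assms(4,8) initial_part_insert_greater initial_part_trans by blast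
  then show "i \<in> q" using tree_paths_downward[OF q assms(5,6)] by blast
qed

section \<open>Boxes of cylinders in the square\<close>

definition box_nowhere_dense :: "'a::linorder set set \<Rightarrow> (('a set \<Rightarrow> bool) \<times> ('a set \<Rightarrow> bool)) set \<Rightarrow> bool"
  where "box_nowhere_dense T N \<longleftrightarrow> (\<forall>s\<in>T. \<forall>t\<in>T. \<exists>s'\<in>T. \<exists>t'\<in>T.
    initial_part s s' \<and> initial_part t t' \<and> (cylinder T s' \<times> cylinder T t') \<inter> N = {})"

locale stationary_tree =
  fixes A :: "'a::{wellorder,linorder_topology} set"
  assumes omega1: "omega1_like TYPE('a)" and stationary: "stationary A"
begin

abbreviation T :: "'a set set" where "T \<equiv> ccs_tree A"
abbreviation X :: "('a set \<Rightarrow> bool) topology" where "X \<equiv> path_space T"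

lemma exists_point_above:
  assumes "countable S"
  shows "\<exists>a\<in>A. \<forall>x\<in>S. x < a"
proof -
  obtain b where b: "\<forall>x\<in>S. x < b" using omega1_like_countable_bounded[OF omega1 assms] by blast
  obtain a where "a \<in> A" "b < a" using stationary_unbounded[OF omega1 stationary] by blast
  then show ?thesis using b by (meson less_trans)
qed

lemma exists_extension_agreeing_on_finite:
  assumes F: "finite F" "F \<subseteq> T" and p: "p \<in> tree_paths T" "s \<in> p"
  shows "\<exists>s'\<in>T. initial_part s s' \<and> (\<forall>q\<in>tree_paths T. s' \<in> q \<longrightarrow> (\<forall>i\<in>F. i \<in> q \<longleftrightarrow> i \<in> p))"
proof -
  have "initial_part_chain (insert s (F \<inter> p))"
    using tree_paths_chain[OF p(1)] p(2) unfolding initial_part_chain_def by blast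
  then obtain m where m: "m \<in> insert s (F \<inter> p)" "\<And>i. i \<in> insert s (F \<inter> p) \<Longrightarrow> initial_part i m"
    using finite_initial_part_chain_greatest[of "insert s (F \<inter> p)"] F(1) by auto
  have mp: "m \<in> p" using m(1) p(2) by blast
  have mT: "m \<in> T" using mp tree_paths_subset[OF p(1)] by blast
  have "countable (\<Union>t\<in>insert m F. t)"
    by (rule countable_UN) (use F mT in \<open>auto intro: ccs_tree_countable countable_finite\<close>)
  then have "countable (\<Union>(insert m F))" by simp
  then obtain a where a: "a \<in> A" "\<forall>x\<in>\<Union>(insert m F). x < a"
    using exists_point_above by blast
  have "insert a m \<in> T" using ccs_tree_insert[OF mT a(1)] .
  moreover have "initial_part m (insert a m)" by (rule initial_part_insert_greater) (use a(2) in blast)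
  then have "initial_part s (insert a m)" using m(2) initial_part_trans by blast
  moreover have "i \<in> q \<longleftrightarrow> i \<in> p"
    if q: "q \<in> tree_paths T" "insert a m \<in> q" and i: "i \<in> F" for q i
  proof -
    have "i \<in> T" "a \<notin> i" using i F(2) a(2) by auto
    moreover have "i \<in> p \<Longrightarrow> initial_part i m" using m(2) i by blast
    ultimately show ?thesis using path_membership_below_insert[OF p(1) q(1) mp _ q(2)] a(2) by blast
  qed
  ultimately show ?thesis by blast
qed

lemma cylinder_subset_open:
  assumes "openin X U" and p: "p \<in> tree_paths T" "path_indicator T p \<in> U" "s \<in> p"
  shows "\<exists>s'\<in>T. initial_part s s' \<and> cylinder T s' \<subseteq> U"
proof -
  obtain F where F: "finite F" "F \<subseteq> T"
    and determined: "\<And>y. y \<in> topspace X \<Longrightarrow> (\<And>i. i \<in> F \<Longrightarrow> y i = path_indicator T p i) \<Longrightarrow> y \<in> U"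
    using openin_path_space_finitely_determined[OF assms(1) p(2)] by blast
  obtain s' where s': "s' \<in> T" "initial_part s s'"
    and agree: "\<And>q i. q \<in> tree_paths T \<Longrightarrow> s' \<in> q \<Longrightarrow> i \<in> F \<Longrightarrow> i \<in> q \<longleftrightarrow> i \<in> p"
    using exists_extension_agreeing_on_finite[OF F p(1,3)] by blast
  have "cylinder T s' \<subseteq> U"
  proof
    fix y assume y: "y \<in> cylinder T s'"
    then obtain q where q: "q \<in> tree_paths T" "y = path_indicator T q" by (rule cylinderE)
    have "s' \<in> q" using y q path_indicator_in_cylinder[OF s'(1)] by simp
    then have "y i = path_indicator T p i" if "i \<in> F" for i
      using agree[OF q(1) _ that] that F(2) q(2) by (auto simp: path_indicator_apply)
    moreover have "y \<in> topspace X" using y unfolding cylinder_def by blast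
    ultimately show "y \<in> U" using determined by blast
  qed
  then show ?thesis using s' by blast
qed

lemma box_subset_open:
  assumes "s \<in> T" "t \<in> T" "openin (prod_topology X X) W" "z \<in> W" "z \<in> cylinder T s \<times> cylinder T t"
  shows "\<exists>s'\<in>T. \<exists>t'\<in>T. initial_part s s' \<and> initial_part t t' \<and> cylinder T s' \<times> cylinder T t' \<subseteq> W"
proof -
  obtain x y where z: "z = (x, y)" and x: "x \<in> cylinder T s" and y: "y \<in> cylinder T t"
    using assms(5) by (cases z) simp
  obtain p where p: "p \<in> tree_paths T" "x = path_indicator T p" using x by (rule cylinderE)
  obtain q where q: "q \<in> tree_paths T" "y = path_indicator T q" using y by (rule cylinderE)
  have "\<exists>U V. openin X U \<and> openin X V \<and> x \<in> U \<and> y \<in> V \<and> U \<times> V \<subseteq> W"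
    using assms(3,4) unfolding z openin_prod_topology_alt by simp
  then obtain U V where UV: "openin X U" "openin X V" "x \<in> U" "y \<in> V" "U \<times> V \<subseteq> W"
    by blast
  have "s \<in> p" using x path_indicator_in_cylinder[OF assms(1) p(1)] p(2) by simp
  then obtain s' where s': "s' \<in> T" "initial_part s s'" "cylinder T s' \<subseteq> U"
    using cylinder_subset_open[OF UV(1) p(1)] UV(3) p(2) by auto
  have "t \<in> q" using y path_indicator_in_cylinder[OF assms(2) q(1)] q(2) by simp
  then obtain t' where t': "t' \<in> T" "initial_part t t'" "cylinder T t' \<subseteq> V"
    using cylinder_subset_open[OF UV(2) q(1)] UV(4) q(2) by auto
  have "cylinder T s' \<times> cylinder T t' \<subseteq> U \<times> V" using s'(3) t'(3) by (rule Sigma_mono)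
  then show ?thesis using s'(1,2) t'(1,2) UV(5) by blast
qed

lemma exists_extension_not_in_path:
  assumes "s \<in> T" "p \<in> tree_paths T"
  shows "\<exists>s'\<in>T. initial_part s s' \<and> s' \<notin> p"
proof -
  have "countable s" by (rule ccs_tree_countable[OF assms(1)])
  then obtain a1 where a1: "a1 \<in> A" "\<forall>x\<in>s. x < a1" using exists_point_above by blast
  have "countable (insert a1 s)" using \<open>countable s\<close> by simp
  then obtain a2 where a2: "a2 \<in> A" "\<forall>x\<in>insert a1 s. x < a2" using exists_point_above by blast
  have "a1 \<notin> insert a2 s" "a2 \<notin> insert a1 s" using a1(2) a2(2) by auto
  then have "\<not> initial_part (insert a1 s) (insert a2 s)" "\<not> initial_part (insert a2 s) (insert a1 s)"
    using initial_part_subset by blast+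
  then have "insert a1 s \<notin> p \<or> insert a2 s \<notin> p"
    using tree_paths_chain[OF assms(2)] unfolding initial_part_chain_def by blast
  moreover have "initial_part s (insert a1 s)" "initial_part s (insert a2 s)"
    using a1(2) a2(2) by (auto intro: initial_part_insert_greater)
  ultimately show ?thesis using ccs_tree_insert[OF assms(1)] a1(1) a2(1) by blast
qed

lemma nowhere_dense_imp_box_nowhere_dense:
  assumes "nowhere_dense_in (prod_topology X X) N"
  shows "box_nowhere_dense T N"
  unfolding box_nowhere_dense_def
proof (intro ballI)
  fix s t assume s: "s \<in> T" and t: "t \<in> T"
  let ?box = "cylinder T s \<times> cylinder T t" and ?K = "prod_topology X X closure_of N"
  have box_open: "openin (prod_topology X X) ?box"
    using s t by (simp add: openin_cylinder openin_prod_Times_iff)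
  have "\<not> ?box \<subseteq> ?K"
  proof
    assume "?box \<subseteq> ?K"
    then have "?box \<subseteq> prod_topology X X interior_of ?K" using box_open by (rule interior_of_maximal)
    moreover have "(path_indicator T {r \<in> T. initial_part r s}, path_indicator T {r \<in> T. initial_part r t}) \<in> ?box"
      using cylinder_nonempty[OF s] cylinder_nonempty[OF t] by simp
    ultimately show False using assms unfolding nowhere_dense_in_def by blast
  qed
  then obtain z where z: "z \<in> ?box" "z \<notin> ?K" by blast
  have "openin (prod_topology X X) (?box - ?K)" using box_open by (intro openin_diff) simp_all
  then obtain s' t' where st': "s' \<in> T" "t' \<in> T" "initial_part s s'" "initial_part t t'"
      "cylinder T s' \<times> cylinder T t' \<subseteq> ?box - ?K"
    using box_subset_open[OF s t _ _ z(1)] z by blast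
  moreover have "N \<subseteq> ?K" using assms unfolding nowhere_dense_in_def by (simp add: closure_of_subset)
  ultimately show "\<exists>s'\<in>T. \<exists>t'\<in>T. initial_part s s' \<and> initial_part t t' \<and> (cylinder T s' \<times> cylinder T t') \<inter> N = {}"
    by blast
qed

text \<open>Inside a box isolating a point of a discrete set, end-extend one side so as to leave the
  path of that point.\<close>
lemma discrete_subspace_imp_box_nowhere_dense:
  assumes "discrete_subspace (prod_topology X X) D"
  shows "box_nowhere_dense T D"
  unfolding box_nowhere_dense_def
proof (intro ballI)
  fix s t assume s: "s \<in> T" and t: "t \<in> T"
  let ?box = "cylinder T s \<times> cylinder T t"
  show "\<exists>s'\<in>T. \<exists>t'\<in>T. initial_part s s' \<and> initial_part t t' \<and> (cylinder T s' \<times> cylinder T t') \<inter> D = {}"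
  proof (cases "?box \<inter> D = {}")
    case True
    then show ?thesis using s t initial_part_refl by blast
  next
    case False
    then obtain x y where z: "(x, y) \<in> ?box" "(x, y) \<in> D" by auto
    have "openin (subtopology (prod_topology X X) D) {(x, y)}"
      using assms z(2) unfolding discrete_subspace_def by simp
    then obtain W where W: "openin (prod_topology X X) W" "{(x, y)} = W \<inter> D"
      unfolding openin_subtopology by blast
    then have "(x, y) \<in> W" by blast
    then obtain s1 t1 where st1: "s1 \<in> T" "t1 \<in> T" "initial_part s s1" "initial_part t t1"
        "cylinder T s1 \<times> cylinder T t1 \<subseteq> W"
      using box_subset_open[OF s t W(1) _ z(1)] by blast
    have "x \<in> cylinder T s" using z(1) by simp
    then obtain p where p: "p \<in> tree_paths T" "x = path_indicator T p" by (rule cylinderE)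
    obtain s2 where s2: "s2 \<in> T" "initial_part s1 s2" "s2 \<notin> p"
      using exists_extension_not_in_path[OF st1(1) p(1)] by blast
    have "x \<notin> cylinder T s2"
      using p(2) path_indicator_in_cylinder[OF s2(1) p(1)] s2(3) by simp
    moreover have "cylinder T s2 \<times> cylinder T t1 \<subseteq> W"
      using cylinder_antimono[OF st1(1) s2(1,2)] st1(5) by blast
    moreover have "(cylinder T s2 \<times> cylinder T t1) \<inter> D \<subseteq> W \<inter> D" using calculation(2) by blast
    ultimately have "(cylinder T s2 \<times> cylinder T t1) \<inter> D = {}" unfolding W(2)[symmetric] by blast
    moreover have "initial_part s s2" using st1(3) s2(2) by (rule initial_part_trans)
    ultimately show ?thesis using s2(1) st1(2,4) by blast
  qed
qed

end

section \<open>Closing off a sequence of dense sets of pairs\<close>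

locale dense_pair_sequence = stationary_tree +
  fixes E :: "nat \<Rightarrow> ('a set \<times> 'a set) set"
  assumes E_subset: "E n \<subseteq> T \<times> T"
    and E_dense: "s \<in> T \<Longrightarrow> t \<in> T \<Longrightarrow> \<exists>(s', t')\<in>E n. initial_part s s' \<and> initial_part t t'"
begin

definition next_point :: "'a \<Rightarrow> 'a set \<Rightarrow> 'a" where
  "next_point g S = (LEAST a. a \<in> A \<and> g < a \<and> (\<forall>x\<in>S. x < a))"

lemma next_point:
  assumes "countable S"
  shows "next_point g S \<in> A \<and> g < next_point g S \<and> (\<forall>x\<in>S. x < next_point g S)"
proof -
  have "countable (insert g S)" using assms by simp
  then obtain a where "a \<in> A" "\<forall>x\<in>insert g S. x < a" using exists_point_above by blast
  then have "a \<in> A \<and> g < a \<and> (\<forall>x\<in>S. x < a)" by simp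
  then show ?thesis unfolding next_point_def by (rule LeastI)
qed

definition extend_pair :: "nat \<Rightarrow> 'a set \<times> 'a set \<Rightarrow> 'a set \<times> 'a set" where
  "extend_pair n st =
    (SOME st'. st' \<in> E n \<and> initial_part (fst st) (fst st') \<and> initial_part (snd st) (snd st'))"

lemma extend_pair:
  assumes "fst st \<in> T" "snd st \<in> T"
  shows "extend_pair n st \<in> E n \<and> initial_part (fst st) (fst (extend_pair n st))
    \<and> initial_part (snd st) (snd (extend_pair n st))"
proof -
  obtain s' t' where "(s', t') \<in> E n" "initial_part (fst st) s'" "initial_part (snd st) t'"
    using E_dense[OF assms, of n] by blast
  then have "\<exists>st'. st' \<in> E n \<and> initial_part (fst st) (fst st') \<and> initial_part (snd st) (snd st')"
    by (intro exI[of _ "(s', t')"]) simp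
  then show ?thesis unfolding extend_pair_def by (rule someI_ex)
qed

text \<open>Adding the same point above \<open>e k\<close> to both coordinates makes them cofinal in the same
  limit.\<close>
primrec closing_chain :: "(nat \<Rightarrow> 'a) \<Rightarrow> nat \<Rightarrow> 'a set \<times> 'a set" where
  "closing_chain e 0 = ({}, {})"
| "closing_chain e (Suc k) =
    (let st = closing_chain e k; a = next_point (e k) (fst st \<union> snd st)
     in extend_pair k (insert a (fst st), insert a (snd st)))"

lemma closing_chain_step:
  assumes "fst (closing_chain e k) \<in> T" "snd (closing_chain e k) \<in> T"
  shows "\<exists>a. e k < a \<and> a \<in> fst (closing_chain e (Suc k)) \<and> a \<in> snd (closing_chain e (Suc k))
    \<and> initial_part (fst (closing_chain e k)) (fst (closing_chain e (Suc k)))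
    \<and> initial_part (snd (closing_chain e k)) (snd (closing_chain e (Suc k)))
    \<and> closing_chain e (Suc k) \<in> E k"
proof -
  let ?s = "fst (closing_chain e k)" and ?t = "snd (closing_chain e k)"
  let ?a = "next_point (e k) (?s \<union> ?t)"
  have "countable (?s \<union> ?t)" using assms ccs_tree_countable by blast
  then have a: "?a \<in> A" "e k < ?a" "\<forall>x\<in>?s \<union> ?t. x < ?a" using next_point by blast+
  then have "insert ?a ?s \<in> T" "insert ?a ?t \<in> T" using assms ccs_tree_insert by blast+
  then have ext: "closing_chain e (Suc k) \<in> E k"
      "initial_part (insert ?a ?s) (fst (closing_chain e (Suc k)))"
      "initial_part (insert ?a ?t) (snd (closing_chain e (Suc k)))"
    using extend_pair[of "(insert ?a ?s, insert ?a ?t)" k] by (simp_all add: Let_def)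
  have "initial_part ?s (insert ?a ?s)" "initial_part ?t (insert ?a ?t)"
    using a(3) by (auto intro: initial_part_insert_greater)
  then have "initial_part ?s (fst (closing_chain e (Suc k)))" "initial_part ?t (snd (closing_chain e (Suc k)))"
    using ext(2,3) initial_part_trans by blast+
  moreover have "?a \<in> fst (closing_chain e (Suc k))" "?a \<in> snd (closing_chain e (Suc k))"
    using initial_part_subset[OF ext(2)] initial_part_subset[OF ext(3)] by blast+
  ultimately show ?thesis using a(2) ext(1) by blast
qed

lemma closing_chain_in_tree: "fst (closing_chain e k) \<in> T \<and> snd (closing_chain e k) \<in> T"
proof (induction k)
  case 0
  then show ?case by (simp add: empty_in_ccs_tree)
next
  case (Suc k)
  then have "closing_chain e (Suc k) \<in> E k" using closing_chain_step[of e k] by blast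
  then have "closing_chain e (Suc k) \<in> T \<times> T" using E_subset by blast
  then show ?case by (simp add: mem_Times_iff)
qed

lemma closing_chain_mono:
  assumes "k \<le> j"
  shows "initial_part (fst (closing_chain e k)) (fst (closing_chain e j))
    \<and> initial_part (snd (closing_chain e k)) (snd (closing_chain e j))"
  using assms
proof (induction j rule: dec_induct)
  case base
  then show ?case by (simp add: initial_part_refl)
next
  case (step j)
  have "initial_part (fst (closing_chain e j)) (fst (closing_chain e (Suc j)))"
    "initial_part (snd (closing_chain e j)) (snd (closing_chain e (Suc j)))"
    using closing_chain_step[of e j] closing_chain_in_tree by blast+
  then show ?case using step.IH initial_part_trans by blast
qed

lemma closing_chain_cong: "\<forall>i<k. e i = e' i \<Longrightarrow> closing_chain e k = closing_chain e' k"
  by (induction k) auto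

definition reachable :: "'a \<Rightarrow> ('a set \<times> 'a set) set" where
  "reachable g = {closing_chain e k | e k. \<forall>i<k. e i \<le> g}"

lemma countable_reachable: "countable (reachable g)"
proof -
  have "reachable g \<subseteq> (\<lambda>xs. closing_chain (\<lambda>i. xs ! i) (length xs)) ` lists {..g}"
  proof
    fix st assume "st \<in> reachable g"
    then obtain e k where st: "st = closing_chain e k" "\<forall>i<k. e i \<le> g" unfolding reachable_def by blast
    then have "st = closing_chain (\<lambda>i. map e [0..<k] ! i) (length (map e [0..<k]))"
      using closing_chain_cong[of k e] by simp
    moreover have "map e [0..<k] \<in> lists {..g}" using st(2) by auto
    ultimately show "st \<in> (\<lambda>xs. closing_chain (\<lambda>i. xs ! i) (length xs)) ` lists {..g}" by blast
  qed
  moreover have "countable (lists {..g})" using omega1_like_countable_atMost[OF omega1] by simp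
  ultimately show ?thesis by (meson countable_image countable_subset)
qed

definition closing_bound :: "'a \<Rightarrow> 'a" where
  "closing_bound g = (SOME b. \<forall>x\<in>(\<Union>st\<in>reachable g. fst st \<union> snd st). x < b)"

lemma closing_bound:
  assumes "st \<in> reachable g" "x \<in> fst st \<union> snd st"
  shows "x < closing_bound g"
proof -
  have "countable (fst st \<union> snd st)" if "st \<in> reachable g" for st
    using that closing_chain_in_tree ccs_tree_countable unfolding reachable_def by blast
  then have "countable (\<Union>st\<in>reachable g. fst st \<union> snd st)"
    using countable_reachable by blast
  then have "\<forall>x\<in>(\<Union>st\<in>reachable g. fst st \<union> snd st). x < closing_bound g"
    unfolding closing_bound_def by (rule someI_ex[OF omega1_like_countable_bounded[OF omega1]])
  then show ?thesis using assms by blast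
qed

lemma closing_chain_limit:
  assumes d: "d \<in> A" "\<forall>g<d. closing_bound g \<le> d" and e: "range e = {..<d}"
    and \<pi>: "\<pi> = fst \<or> \<pi> = snd"
  defines "S \<equiv> range (\<lambda>k. \<pi> (closing_chain e k))"
  shows "insert d (\<Union>S) \<in> T" and "initial_part (\<pi> (closing_chain e k)) (insert d (\<Union>S))"
proof -
  have "initial_part (\<pi> (closing_chain e k)) (\<pi> (closing_chain e j))" if "k \<le> j" for k j
    using closing_chain_mono[OF that, of e] \<pi> by auto
  then have chain: "initial_part_chain S" unfolding S_def by (rule initial_part_chain_range)
  have below: "x < d" if x: "x \<in> \<Union>S" for x
  proof -
    obtain k where x: "x \<in> \<pi> (closing_chain e k)" using x unfolding S_def by blast
    define m where "m = Max (e ` {..k})"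
    have "m \<in> e ` {..k}" unfolding m_def by (rule Max_in) auto
    then have "m < d" using e by auto
    have "\<forall>i<k. e i \<le> m" unfolding m_def by (auto intro: Max_ge)
    then have "closing_chain e k \<in> reachable m" unfolding reachable_def by blast
    moreover have "x \<in> fst (closing_chain e k) \<union> snd (closing_chain e k)" using x \<pi> by auto
    ultimately have "x < closing_bound m" by (rule closing_bound)
    then show "x < d" using d(2) \<open>m < d\<close> by (meson less_le_trans)
  qed
  have cofinal: "\<exists>x\<in>\<Union>S. b < x" if "b < d" for b
  proof -
    have "b \<in> range e" using e that by simp
    then obtain i where "e i = b" by (auto simp: image_iff)
    then obtain a where "b < a" "a \<in> fst (closing_chain e (Suc i))" "a \<in> snd (closing_chain e (Suc i))"
      using closing_chain_step[of e i] closing_chain_in_tree[of e i] by blast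
    then have "b < a" "a \<in> \<pi> (closing_chain e (Suc i))" using \<pi> by auto
    then show ?thesis unfolding S_def by blast
  qed
  have "countable S" unfolding S_def by simp
  moreover have "S \<subseteq> T" using closing_chain_in_tree \<pi> unfolding S_def by auto
  moreover have "e 0 < d" using e by auto
  ultimately show "insert d (\<Union>S) \<in> T"
    using insert_Union_chain_in_ccs_tree[OF chain _ _ d(1) _ below cofinal] by blast
  show "initial_part (\<pi> (closing_chain e k)) (insert d (\<Union>S))"
    by (rule initial_part_Union_chain_insert[OF chain]) (auto simp: S_def below)
qed

text \<open>Since \<open>A\<close> is stationary, it meets the club of points closed under \<open>closing_bound\<close>;
  running the construction along an enumeration of such a point \<open>d\<close> keeps both coordinates
  below \<open>d\<close> and cofinal in it, so \<open>d\<close> can be added on top.\<close>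
theorem exists_pair_above_dense_sequence:
  "\<exists>s\<in>T. \<exists>t\<in>T. \<forall>n. \<exists>(s', t')\<in>E n. initial_part s' s \<and> initial_part t' t"
proof -
  obtain c :: 'a where c: "undefined < c"
    using omega1_like_countable_bounded[OF omega1, of "{undefined}"] by auto
  obtain d where d: "d \<in> A" "c \<le> d" "\<forall>g<d. closing_bound g \<le> d"
    using stationary club_closure_points[OF omega1, of c closing_bound] unfolding stationary_def by blast
  define e where "e = from_nat_into {..<d}"
  have "undefined \<in> {..<d}" using c d(2) by simp
  then have "{..<d} \<noteq> {}" by blast
  moreover have "countable {..<d}" using omega1 unfolding omega1_like_def by blast
  ultimately have e: "range e = {..<d}" unfolding e_def by (rule range_from_nat_into)
  define lim where "lim \<pi> = insert d (\<Union>(range (\<lambda>k. \<pi> (closing_chain e k))))" for \<pi>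
  have "lim fst \<in> T" "lim snd \<in> T" unfolding lim_def using closing_chain_limit(1)[OF d(1,3) e] by blast+
  moreover have "\<exists>(s', t')\<in>E n. initial_part s' (lim fst) \<and> initial_part t' (lim snd)" for n
  proof
    show "closing_chain e (Suc n) \<in> E n" using closing_chain_step closing_chain_in_tree by blast
    show "case closing_chain e (Suc n) of (s', t') \<Rightarrow> initial_part s' (lim fst) \<and> initial_part t' (lim snd)"
      using closing_chain_limit(2)[OF d(1,3) e, of fst "Suc n"] closing_chain_limit(2)[OF d(1,3) e, of snd "Suc n"]
      unfolding lim_def by (simp add: case_prod_beta del: closing_chain.simps)
  qed
  ultimately show ?thesis by blast
qed

end

section \<open>Non-separability of the square\<close>

context stationary_tree
begin

lemma not_dense_Union_box_nowhere_dense: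
  fixes N :: "nat \<Rightarrow> (('a set \<Rightarrow> bool) \<times> ('a set \<Rightarrow> bool)) set"
  assumes "\<And>n. box_nowhere_dense T (N n)"
  shows "\<not> dense_in (prod_topology X X) (\<Union>(range N))"
proof
  assume dense: "dense_in (prod_topology X X) (\<Union>(range N))"
  define E where "E n = {(s', t') \<in> T \<times> T. (cylinder T s' \<times> cylinder T t') \<inter> N n = {}}" for n
  interpret dense_pair_sequence A E
  proof
    show "E n \<subseteq> T \<times> T" for n unfolding E_def by blast
    fix n s t assume "s \<in> T" "t \<in> T"
    then obtain s' t' where "s' \<in> T" "t' \<in> T" "initial_part s s'" "initial_part t t'"
        "(cylinder T s' \<times> cylinder T t') \<inter> N n = {}"
      using assms[of n] unfolding box_nowhere_dense_def by blast
    then show "\<exists>(s', t')\<in>E n. initial_part s s' \<and> initial_part t t'"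
      unfolding E_def by (intro bexI[of _ "(s', t')"]) auto
  qed
  obtain s t where st: "s \<in> T" "t \<in> T"
    and extends: "\<And>n. \<exists>(s', t')\<in>E n. initial_part s' s \<and> initial_part t' t"
    using exists_pair_above_dense_sequence by blast
  have "(cylinder T s \<times> cylinder T t) \<inter> N n = {}" for n
  proof -
    obtain s' t' where "(s', t') \<in> E n" and ext: "initial_part s' s" "initial_part t' t"
      using extends[of n] by blast
    then have st': "s' \<in> T" "t' \<in> T" and "(cylinder T s' \<times> cylinder T t') \<inter> N n = {}"
      unfolding E_def by auto
    moreover have "cylinder T s \<subseteq> cylinder T s'" "cylinder T t \<subseteq> cylinder T t'"
      using cylinder_antimono[OF st'(1) st(1) ext(1)] cylinder_antimono[OF st'(2) st(2) ext(2)] .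
    ultimately show ?thesis by blast
  qed
  then have "(cylinder T s \<times> cylinder T t) \<inter> \<Union>(range N) = {}" by blast
  moreover have "openin (prod_topology X X) (cylinder T s \<times> cylinder T t)"
    using st by (simp add: openin_cylinder openin_prod_Times_iff)
  ultimately have "(cylinder T s \<times> cylinder T t) \<inter> prod_topology X X closure_of (\<Union>(range N)) = {}"
    by (simp add: openin_Int_closure_of_eq_empty)
  moreover have "(path_indicator T {r \<in> T. initial_part r s}, path_indicator T {r \<in> T. initial_part r t})
      \<in> (cylinder T s \<times> cylinder T t) \<inter> topspace (prod_topology X X)"
    using cylinder_nonempty[OF st(1)] cylinder_nonempty[OF st(2)] unfolding cylinder_def by simp
  ultimately show False using dense unfolding dense_in_def by simp
qed

lemma not_nwd_separable_square: "\<not> nwd_separable (prod_topology X X)"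
proof
  assume "nwd_separable (prod_topology X X)"
  then obtain N :: "nat \<Rightarrow> _" where "dense_in (prod_topology X X) (\<Union>(range N))"
    and "\<And>n. nowhere_dense_in (prod_topology X X) (N n)"
    unfolding nwd_separable_def by blast
  then show False
    using not_dense_Union_box_nowhere_dense[of N] nowhere_dense_imp_box_nowhere_dense by blast
qed

lemma not_d_separable_square: "\<not> d_separable (prod_topology X X)"
proof
  assume "d_separable (prod_topology X X)"
  then obtain N :: "nat \<Rightarrow> _" where "dense_in (prod_topology X X) (\<Union>(range N))"
    and "\<And>n. discrete_subspace (prod_topology X X) (N n)"
    unfolding d_separable_def by blast
  then show False
    using not_dense_Union_box_nowhere_dense[of N] discrete_subspace_imp_box_nowhere_dense by blast
qed

end

theorem theorem2p7:
  fixes A :: "'a::{wellorder,linorder_topology} set"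
  assumes "omega1_like TYPE('a)"
    and "stationary A"
    and "stationary (- A)"
  shows "corson_compactum (path_space (ccs_tree A))
    \<and> \<not> nwd_separable (prod_topology (path_space (ccs_tree A)) (path_space (ccs_tree A)))
    \<and> \<not> d_separable (prod_topology (path_space (ccs_tree A)) (path_space (ccs_tree A)))"
proof -
  interpret stationary_tree A using assms(1,2) by unfold_locales
  show ?thesis
    using corson_compactum_path_space[OF assms(1,3)] not_nwd_separable_square not_d_separable_square
    by blast
qed

end
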